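(* Let $\mathbf{k}$ be a commutative noetherian ring, $M\ge0$, and let $I\subseteq\mathcal{P}_M$ be an ideal. Then $\mathrm{init}(I)$ is a monomial ideal of $\mathcal{P}_M$.
   Context: Notation: $\mathcal{P}_{d,n}=(\bigwedge^d\mathbf{k}^{Md})^{\otimes n}$, $\mathcal{P}_M=\bigoplus_{d,n\ge0}\mathcal{P}_{d,n}$, with standard basis $v_1,\dots,v_{Md}$ of $\mathbf{k}^{Md}$ and $v_S=v_{s_1}\wedge\cdots\wedge v_{s_d}$ for $S=\{s_1<\dots<s_d\}\subseteq[Md]$; monomials are $c\,v_{S^1}\otimes\cdots\otimes v_{S^n}$, $c\in\mathbf k$. Products: for a split $\sigma=(A,B)$ of $[n+m]$ (complementary subsets $A=\{i_1<\dots<i_n\}$, $B=\{j_1<\dots<j_m\}$), $(u_1\otimes\cdots\otimes u_n)\cdot_\sigma(w_1\otimes\cdots\otimes w_m)=z_1\otimes\cdots\otimes z_{n+m}$ with $z_{i_k}=u_k$, $z_{j_k}=w_k$ (bilinear; $0$ if bidegrees do not fit). For $g$ a strictly increasing map $\mathbf N\to\mathbf N$ and $f\in\mathcal{P}_{d,n}$, $h\in\mathcal{P}_{e,n}$: $f\ast_g h=0$ unless $g([Md])\subseteq[M(d+e)]$, in which case with $g^c:[Me]\to[M(d+e)]$ the increasing bijection onto $[M(d+e)]\setminus g([Md])$, $(v_{S^1}\otimes\cdots\otimes v_{S^n})\ast_g(v_{T^1}\otimes\cdots\otimes v_{T^n})=\bigotimes_i (v_{g(s^i_1)}\wedge\cdots\wedge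 v_{g(s^i_d)}\wedge v_{g^c(t^i_1)}\wedge\cdots\wedge v_{g^c(t^i_e)})$ (bilinear; $0$ for different numbers of tensor factors). An ideal is a $\mathbf{k}$-submodule $I=\bigoplus_{d,n}(I\cap\mathcal{P}_{d,n})$ with $f\ast_g h\in I$ and $h\cdot_\sigma f\in I$ for all $f\in I$, $h\in\mathcal P$, $g$, $\sigma$; a monomial ideal is an ideal generated by monomials. Monomial order: encode the basis monomial $v_{S^1}\otimes\cdots\otimes v_{S^n}$ of bidegree $(d,n)$ as the element $(S^1,\dots,S^n)\in(\mathbf{Z}^d)^n$, each $S^i$ written as its increasing sequence of entries; order $\mathbf Z^d$ lexicographically and then $(\mathbf Z^d)^n$ lexicographically; call this total order $\preceq$ (only monomials of the same bidegree are compared). For $f\in\mathcal{P}_{d,n}$ nonzero, $\mathrm{init}(f)$ is the $\preceq$-largest basis monomial occurring in $f$ with nonzero coefficient, together with that coefficient. For an ideal $I$, $\mathrm{init}(I)$ is the $\mathbf k$-span of $\{\mathrm{init}(f): f\in I\cap\mathcal P_{d,n}$ for some $d,n\}$. *)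

theory Defs
  imports Main "HOL-Library.List_Lexorder"
begin

definition ring_ideal :: "'a::comm_ring_1 set \<Rightarrow> bool" where
  "ring_ideal J \<longleftrightarrow> 0 \<in> J \<and> (\<forall>x\<in>J. \<forall>y\<in>J. x + y \<in> J) \<and> (\<forall>r. \<forall>x\<in>J. r * x \<in> J)"

definition ring_span :: "'a::comm_ring_1 set \<Rightarrow> 'a set" where
  "ring_span F = {y. \<exists>c. y = (\<Sum>x\<in>F. c x * x)}"

definition noetherian_ring :: "'a::comm_ring_1 itself \<Rightarrow> bool" where
  "noetherian_ring _ \<longleftrightarrow>
     (\<forall>J::'a set. ring_ideal J \<longrightarrow> (\<exists>F. finite F \<and> F \<subseteq> J \<and> J = ring_span F))"

text \<open>A basis monomial v_{S^1} (x) ... (x) v_{S^n} of bidegree (d,n) is encoded as the pair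
  (d, [S^1,...,S^n]); the exterior degree d is kept explicitly (needed when n = 0).\<close>

type_synonym key = "nat \<times> nat set list"

definition valid_key :: "nat \<Rightarrow> key \<Rightarrow> bool" where
  "valid_key M x \<longleftrightarrow> (\<forall>S \<in> set (snd x). S \<subseteq> {1..M * fst x} \<and> card S = fst x)"

definition bideg :: "key \<Rightarrow> nat \<times> nat" where
  "bideg x = (fst x, length (snd x))"

definition supp :: "(key \<Rightarrow> 'k::comm_ring_1) \<Rightarrow> key set" where
  "supp f = {x. f x \<noteq> 0}"

definition PM :: "nat \<Rightarrow> (key \<Rightarrow> 'k::comm_ring_1) set" where
  "PM M = {f. finite (supp f) \<and> (\<forall>x \<in> supp f. valid_key M x)}"

definition Pdn :: "nat \<Rightarrow> nat \<Rightarrow> nat \<Rightarrow> (key \<Rightarrow> 'k::comm_ring_1) set" where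
  "Pdn M d n = {f \<in> PM M. \<forall>x \<in> supp f. bideg x = (d, n)}"

definition hcomp :: "nat \<Rightarrow> nat \<Rightarrow> (key \<Rightarrow> 'k::comm_ring_1) \<Rightarrow> (key \<Rightarrow> 'k)" where
  "hcomp d n f = (\<lambda>x. if bideg x = (d, n) then f x else 0)"

definition monomial :: "key \<Rightarrow> 'k::comm_ring_1 \<Rightarrow> (key \<Rightarrow> 'k)" where
  "monomial x c = (\<lambda>z. if z = x then c else 0)"

definition monomials :: "nat \<Rightarrow> (key \<Rightarrow> 'k::comm_ring_1) set" where
  "monomials M = {monomial x c | x c. valid_key M x}"

text \<open>Bilinear extension of a product on basis monomials, given as an optional
  (integer sign, resulting basis monomial).\<close>

definition lift :: "(key \<Rightarrow> key \<Rightarrow> (int \<times> key) option)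
     \<Rightarrow> (key \<Rightarrow> 'k::comm_ring_1) \<Rightarrow> (key \<Rightarrow> 'k) \<Rightarrow> (key \<Rightarrow> 'k)" where
  "lift F f h = (\<lambda>z. \<Sum>x\<in>supp f. \<Sum>y\<in>supp h.
      (case F x y of None \<Rightarrow> 0
                   | Some (c, w) \<Rightarrow> if w = z then of_int c * f x * h y else 0))"

text \<open>Tensor concatenation along a split sigma = (A,B) of [n+m] = {1..n+m}.\<close>

definition interleave :: "nat set \<Rightarrow> nat set \<Rightarrow> 'a list \<Rightarrow> 'a list \<Rightarrow> nat \<Rightarrow> 'a" where
  "interleave A B us ws i =
     (if i \<in> A then us ! card {a \<in> A. a < i} else ws ! card {b \<in> B. b < i})"

definition sigma_mono :: "nat set \<Rightarrow> nat set \<Rightarrow> key \<Rightarrow> key \<Rightarrow> (int \<times> key) option" where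
  "sigma_mono A B x y =
     (let n = length (snd x); m = length (snd y) in
      if fst x = fst y \<and> A \<inter> B = {} \<and> A \<union> B = {1..n + m} \<and> card A = n
      then Some (1, (fst x, map (interleave A B (snd x) (snd y)) [1..<n + m + 1]))
      else None)"

definition sigma_prod :: "nat set \<Rightarrow> nat set \<Rightarrow> (key \<Rightarrow> 'k::comm_ring_1) \<Rightarrow> (key \<Rightarrow> 'k) \<Rightarrow> (key \<Rightarrow> 'k)" where
  "sigma_prod A B = lift (sigma_mono A B)"

text \<open>The product f *_g h. g^c is the increasing bijection [Me] -> [M(d+e)] - g([Md]);
  the sign is that of sorting the wedge v_{g(s_1)} ^ ... ^ v_{g(s_d)} ^ v_{g^c(t_1)} ^ ... ^ v_{g^c(t_e)},
  i.e. (-1) to the number of pairs a in g(S), b in g^c(T) with b < a.\<close>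

definition gcomp :: "nat \<Rightarrow> (nat \<Rightarrow> nat) \<Rightarrow> nat \<Rightarrow> nat \<Rightarrow> nat \<Rightarrow> nat" where
  "gcomp M g d e t = sorted_list_of_set ({1..M * (d + e)} - g ` {1..M * d}) ! (t - 1)"

definition wedge_inv :: "nat set \<Rightarrow> nat set \<Rightarrow> nat" where
  "wedge_inv P Q = card {(a, b). a \<in> P \<and> b \<in> Q \<and> b < a}"

definition star_mono :: "nat \<Rightarrow> (nat \<Rightarrow> nat) \<Rightarrow> key \<Rightarrow> key \<Rightarrow> (int \<times> key) option" where
  "star_mono M g x y =
     (let d = fst x; e = fst y; gc = gcomp M g d e in
      if length (snd x) = length (snd y) \<and> g ` {1..M * d} \<subseteq> {1..M * (d + e)}
      then Some ((-1) ^ (\<Sum>(S, T)\<leftarrow>zip (snd x) (snd y). wedge_inv (g ` S) (gc ` T)),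
                 (d + e, map (\<lambda>(S, T). g ` S \<union> gc ` T) (zip (snd x) (snd y))))
      else None)"

definition star_prod :: "nat \<Rightarrow> (nat \<Rightarrow> nat) \<Rightarrow> (key \<Rightarrow> 'k::comm_ring_1) \<Rightarrow> (key \<Rightarrow> 'k) \<Rightarrow> (key \<Rightarrow> 'k)" where
  "star_prod M g = lift (star_mono M g)"

definition is_ideal :: "nat \<Rightarrow> (key \<Rightarrow> 'k::comm_ring_1) set \<Rightarrow> bool" where
  "is_ideal M I \<longleftrightarrow>
     I \<subseteq> PM M \<and> (\<lambda>_. 0) \<in> I \<and>
     (\<forall>f\<in>I. \<forall>h\<in>I. (\<lambda>z. f z + h z) \<in> I) \<and>
     (\<forall>c. \<forall>f\<in>I. (\<lambda>z. c * f z) \<in> I) \<and>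
     (\<forall>f\<in>I. \<forall>d n. hcomp d n f \<in> I) \<and>
     (\<forall>f\<in>I. \<forall>h\<in>PM M. \<forall>g. strict_mono g \<longrightarrow> star_prod M g f h \<in> I) \<and>
     (\<forall>f\<in>I. \<forall>h\<in>PM M. \<forall>A B. sigma_prod A B h f \<in> I)"

definition ideal_gen :: "nat \<Rightarrow> (key \<Rightarrow> 'k::comm_ring_1) set \<Rightarrow> (key \<Rightarrow> 'k) set" where
  "ideal_gen M G = \<Inter>{J. is_ideal M J \<and> G \<subseteq> J}"

definition monomial_ideal :: "nat \<Rightarrow> (key \<Rightarrow> 'k::comm_ring_1) set \<Rightarrow> bool" where
  "monomial_ideal M I \<longleftrightarrow> is_ideal M I \<and> (\<exists>G \<subseteq> monomials M. I = ideal_gen M G)"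

text \<open>Monomial order: (S^1,...,S^n), each S^i as its increasing sequence, compared
  lexicographically (List_Lexorder); only used within a fixed bidegree.\<close>

definition key_rep :: "key \<Rightarrow> nat list list" where
  "key_rep x = map sorted_list_of_set (snd x)"

definition lead_key :: "(key \<Rightarrow> 'k::comm_ring_1) \<Rightarrow> key" where
  "lead_key f = (THE x. x \<in> supp f \<and> (\<forall>y \<in> supp f. key_rep y \<le> key_rep x))"

definition init :: "(key \<Rightarrow> 'k::comm_ring_1) \<Rightarrow> (key \<Rightarrow> 'k)" where
  "init f = monomial (lead_key f) (f (lead_key f))"

definition kspan :: "(key \<Rightarrow> 'k::comm_ring_1) set \<Rightarrow> (key \<Rightarrow> 'k) set" where
  "kspan X = {f. \<exists>F c. finite F \<and> F \<subseteq> X \<and> f = (\<lambda>z. \<Sum>p\<in>F. c p * p z)}"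

definition init_ideal :: "nat \<Rightarrow> (key \<Rightarrow> 'k::comm_ring_1) set \<Rightarrow> (key \<Rightarrow> 'k) set" where
  "init_ideal M I = kspan {init f | f. f \<noteq> (\<lambda>_. 0) \<and> (\<exists>d n. f \<in> I \<inter> Pdn M d n)}"

end

theory Submission
  imports Defs
begin

(* Taking initial terms commutes with both products by a basis monomial m: the maps
   x \<mapsto> x *_g m and x \<mapsto> m \<cdot>_\<sigma> x send the basis monomials of a fixed bidegree to basis
   monomials, up to a sign, and strictly preserve the monomial order -- for *_g because g and
   g^c are increasing and the entries g^c(T) contributed by m are the same on both sides, for
   \<cdot>_\<sigma> because interleaving with the factors of m keeps the first differing factor first.
   Hence init (f *_g m) = init f *_g m and init (m \<cdot>_\<sigma> f) = m \<cdot>_\<sigma> init f for homogeneous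
   f \<in> I, and by bilinearity the k-span of the initial monomials of homogeneous elements of I is
   closed under both products; it is also closed under homogeneous components, so it is the ideal
   generated by these monomials. *)

section \<open>Lexicographic comparison of increasing enumerations\<close>

lemma list_less_iff_nth:
  fixes xs ys :: "'a::linorder list"
  assumes "length xs = length ys"
  shows "xs < ys \<longleftrightarrow> (\<exists>i<length xs. (\<forall>j<i. xs ! j = ys ! j) \<and> xs ! i < ys ! i)"
proof -
  have "take i xs = take i ys \<longleftrightarrow> (\<forall>j<i. xs ! j = ys ! j)" if "i < length xs" for i
    using that assms by (metis nth_take nth_take_lemma less_imp_le_nat)
  then show ?thesis
    using assms unfolding list_less_def lexord_take_index_conv by auto
qed

lemma sorted_list_of_set_less_if_Min_sym_diff:
  fixes A B :: "'a::linorder set"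
  assumes "finite A" "finite B" "card A = card B" "A \<noteq> B" "Min (sym_diff A B) \<in> A"
  shows "sorted_list_of_set A < sorted_list_of_set B"
  using assms
proof (induction "card A" arbitrary: A B)
  case 0
  then show ?case by simp
next
  case (Suc k)
  then have "A \<noteq> {}" "B \<noteq> {}" by auto
  then have A: "sorted_list_of_set A = Min A # sorted_list_of_set (A - {Min A})"
    and B: "sorted_list_of_set B = Min B # sorted_list_of_set (B - {Min B})"
    using Suc.prems sorted_list_of_set_nonempty by blast+
  have "Min A \<in> A" "Min B \<in> B" using \<open>A \<noteq> {}\<close> \<open>B \<noteq> {}\<close> Suc.prems by simp_all
  have D: "sym_diff A B \<noteq> {}" "finite (sym_diff A B)" using Suc.prems by auto
  consider "Min A = Min B" | "Min A < Min B" | "Min B < Min A" using less_linear by blast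
  then show ?case
  proof cases
    case 1
    have sd: "sym_diff (A - {Min A}) (B - {Min A}) = sym_diff A B"
      using 1 \<open>Min A \<in> A\<close> \<open>Min B \<in> B\<close> by auto
    have "Min (sym_diff A B) \<noteq> Min A"
      using Min_in[OF D(2,1)] 1 \<open>Min A \<in> A\<close> \<open>Min B \<in> B\<close> by auto
    moreover have "A - {Min A} \<noteq> B - {Min A}" using sd D(1) by auto
    ultimately have "sorted_list_of_set (A - {Min A}) < sorted_list_of_set (B - {Min A})"
      using Suc.hyps(1)[of "A - {Min A}" "B - {Min A}"] Suc.hyps(2) Suc.prems
        \<open>Min A \<in> A\<close> \<open>Min B \<in> B\<close> 1 unfolding sd by auto
    then show ?thesis using A B 1 by simp
  next
    case 2
    then show ?thesis using A B by simp
  next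
    case 3
    have "Min B \<notin> A" using 3 Suc.prems(1) by (meson Min_le leD)
    then have "Min (sym_diff A B) \<le> Min B" using \<open>Min B \<in> B\<close> D by simp
    moreover have "Min A \<le> Min (sym_diff A B)" using Suc.prems(1,5) by simp
    ultimately show ?thesis using 3 by simp
  qed
qed

lemma sorted_list_of_set_less_iff:
  fixes A B :: "'a::linorder set"
  assumes "finite A" "finite B" "card A = card B"
  shows "sorted_list_of_set A < sorted_list_of_set B \<longleftrightarrow> A \<noteq> B \<and> Min (sym_diff A B) \<in> A"
proof
  assume less: "sorted_list_of_set A < sorted_list_of_set B"
  then have "A \<noteq> B" by auto
  moreover have "Min (sym_diff A B) \<in> sym_diff A B" using \<open>A \<noteq> B\<close> assms by (intro Min_in) auto
  moreover have "\<not> sorted_list_of_set B < sorted_list_of_set A" using less by simp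
  ultimately show "A \<noteq> B \<and> Min (sym_diff A B) \<in> A"
    using sorted_list_of_set_less_if_Min_sym_diff[of B A] assms by (auto simp: Un_commute)
qed (use sorted_list_of_set_less_if_Min_sym_diff assms in blast)

lemma sorted_list_of_set_image_Un_less:
  fixes g :: "'a::linorder \<Rightarrow> 'b::linorder"
  assumes g: "strict_mono g" and fin: "finite S" "finite S'" "finite U" and "card S = card S'"
    and less: "sorted_list_of_set S < sorted_list_of_set S'"
    and disj: "U \<inter> g ` S = {}" "U \<inter> g ` S' = {}"
  shows "sorted_list_of_set (g ` S \<union> U) < sorted_list_of_set (g ` S' \<union> U)"
proof -
  have inj: "inj g" using g strict_mono_imp_inj_on by blast
  have D: "sym_diff (g ` S \<union> U) (g ` S' \<union> U) = g ` sym_diff S S'"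
    using disj inj by (auto simp: inj_eq)
  have S: "S \<noteq> S'" "Min (sym_diff S S') \<in> S"
    using less sorted_list_of_set_less_iff fin assms(5) by blast+
  then have "Min (g ` sym_diff S S') = g (Min (sym_diff S S'))"
    using mono_Min_commute[OF strict_mono_mono[OF g]] fin by auto
  then have "g ` S \<union> U \<noteq> g ` S' \<union> U \<and> Min (sym_diff (g ` S \<union> U) (g ` S' \<union> U)) \<in> g ` S \<union> U"
    using D S by auto
  moreover have "card (g ` S \<union> U) = card (g ` S' \<union> U)"
    using disj fin assms(5) inj by (simp add: card_Un_disjoint card_image inj_on_subset Int_commute)
  ultimately show ?thesis using sorted_list_of_set_less_iff[of "g ` S \<union> U" "g ` S' \<union> U"] fin by simp
qed

lemma map_zip_less:
  fixes F :: "'a \<Rightarrow> 'c \<Rightarrow> 'b::linorder" and r :: "'a \<Rightarrow> 'd::linorder"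
  assumes less: "map r xs < map r ys" and len: "length ys = length xs" "length zs = length xs"
    and inj: "\<And>j. j < length xs \<Longrightarrow> r (xs ! j) = r (ys ! j) \<Longrightarrow> xs ! j = ys ! j"
    and mono: "\<And>j. j < length xs \<Longrightarrow> r (xs ! j) < r (ys ! j) \<Longrightarrow> F (xs ! j) (zs ! j) < F (ys ! j) (zs ! j)"
  shows "map (\<lambda>(a, c). F a c) (zip xs zs) < map (\<lambda>(a, c). F a c) (zip ys zs)"
proof -
  obtain i where i: "i < length xs" "\<forall>j<i. r (xs ! j) = r (ys ! j)" "r (xs ! i) < r (ys ! i)"
    using less len list_less_iff_nth[of "map r xs" "map r ys"] by auto
  have "\<forall>j<i. xs ! j = ys ! j" using i inj by auto
  then show ?thesis
    using i mono len by (subst list_less_iff_nth) auto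
qed

section \<open>Interleaving along a split\<close>

lemma card_less_elems_less_card:
  fixes X :: "'a::linorder set"
  assumes "finite X" "k \<in> X"
  shows "card {a \<in> X. a < k} < card X"
  using assms by (intro psubset_card_mono) auto

lemma card_less_elems_strict_mono:
  fixes X :: "'a::linorder set"
  assumes "finite X" "k \<in> X" "k < l"
  shows "card {a \<in> X. a < k} < card {a \<in> X. a < l}"
  using assms by (intro psubset_card_mono) auto

lemma ex_card_less_elems_eq:
  fixes B :: "'a::linorder set"
  assumes "finite B" "i < card B"
  shows "\<exists>p\<in>B. card {b \<in> B. b < p} = i"
proof -
  let ?rank = "\<lambda>p. card {b \<in> B. b < p}"
  have "strict_mono_on B ?rank"
    by (rule strict_mono_onI) (use card_less_elems_strict_mono[OF assms(1)] in blast)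
  then have "inj_on ?rank B" by (rule strict_mono_on_imp_inj_on)
  then have "card (?rank ` B) = card {..<card B}" by (simp add: card_image)
  moreover have "?rank ` B \<subseteq> {..<card B}" using card_less_elems_less_card assms(1) by auto
  ultimately have "?rank ` B = {..<card B}" by (simp add: card_subset_eq)
  then have "i \<in> ?rank ` B" using assms(2) by simp
  then show ?thesis by blast
qed

context
  fixes A B :: "nat set" and n m :: nat
  assumes part: "A \<inter> B = {}" "A \<union> B = {1..n + m}" and card_A: "card A = n"
begin

private lemma card_B: "card B = m" and finite_AB: "finite A" "finite B"
proof -
  have "finite (A \<union> B)" using part(2) by simp
  then show "finite A" "finite B" by simp_all
  then show "card B = m" using card_Un_disjoint[of A B] part card_A by simp
qed

lemma interleave_index_bounds:
  assumes "k \<in> {1..n + m}"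
  shows "k \<in> A \<Longrightarrow> card {a \<in> A. a < k} < n" and "k \<notin> A \<Longrightarrow> k \<in> B \<and> card {b \<in> B. b < k} < m"
proof -
  show "card {a \<in> A. a < k} < n" if "k \<in> A"
    using card_less_elems_less_card[OF finite_AB(1) that] card_A by simp
  show "k \<in> B \<and> card {b \<in> B. b < k} < m" if "k \<notin> A"
  proof -
    have "k \<in> B" using that assms part(2) by auto
    then show ?thesis using card_less_elems_less_card[OF finite_AB(2)] card_B by simp
  qed
qed

lemma map_interleave:
  assumes "length us = n" "length ws = m"
  shows "map f (map (interleave A B us ws) [1..<n + m + 1])
       = map (interleave A B (map f us) (map f ws)) [1..<n + m + 1]"
proof -
  have "f (interleave A B us ws k) = interleave A B (map f us) (map f ws) k" if "k \<in> {1..n + m}" for k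
    using interleave_index_bounds[OF that] assms by (cases "k \<in> A") (simp_all add: interleave_def)
  then show ?thesis by (simp del: upt_Suc)
qed

lemma interleave_less:
  fixes us ws ws' :: "'a::linorder list"
  assumes len: "length ws = m" "length ws' = m" and less: "ws < ws'"
  shows "map (interleave A B us ws) [1..<n + m + 1] < map (interleave A B us ws') [1..<n + m + 1]"
proof -
  obtain i where i: "i < m" "\<forall>j<i. ws ! j = ws' ! j" "ws ! i < ws' ! i"
    using less len list_less_iff_nth[of ws ws'] by auto
  obtain p where p: "p \<in> B" "card {b \<in> B. b < p} = i"
    using ex_card_less_elems_eq[of B i] i(1) card_B finite_AB by auto
  have "p \<in> {1..n + m}" "p \<notin> A" using p part by auto
  have same: "interleave A B us ws k = interleave A B us ws' k" if "k \<in> {1..n + m}" "k < p" for k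
  proof (cases "k \<in> A")
    case False
    then have "k \<in> B" using that part by auto
    then have "card {b \<in> B. b < k} < i"
      using card_less_elems_strict_mono[OF finite_AB(2)] that(2) p(2) by blast
    then show ?thesis using False i(2) by (simp add: interleave_def)
  qed (simp add: interleave_def)
  define L L' where "L = map (interleave A B us ws) [1..<n + m + 1]"
    and "L' = map (interleave A B us ws') [1..<n + m + 1]"
  have nth: "L ! j = interleave A B us ws (Suc j)" "L' ! j = interleave A B us ws' (Suc j)"
    if "j < n + m" for j
    using that by (simp_all add: L_def L'_def del: upt_Suc)
  have "\<exists>j<length L. (\<forall>j'<j. L ! j' = L' ! j') \<and> L ! j < L' ! j"
  proof (intro exI conjI allI impI)
    show "p - 1 < length L" using \<open>p \<in> {1..n + m}\<close> by (auto simp: L_def)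
    show "L ! j = L' ! j" if "j < p - 1" for j
    proof -
      have "j < n + m" "Suc j \<in> {1..n + m}" "Suc j < p" using that \<open>p \<in> {1..n + m}\<close> by auto
      then show ?thesis using same nth by simp
    qed
    show "L ! (p - 1) < L' ! (p - 1)"
    proof -
      have "p - 1 < n + m" "Suc (p - 1) = p" using \<open>p \<in> {1..n + m}\<close> by auto
      then show ?thesis using nth \<open>p \<notin> A\<close> p(2) i(3) by (simp add: interleave_def)
    qed
  qed
  then show ?thesis using list_less_iff_nth[of L L'] by (simp add: L_def L'_def del: upt_Suc)
qed

end

section \<open>Linear extension of maps on basis monomials\<close>

definition lift_coeff :: "(key \<Rightarrow> (int \<times> key) option) \<Rightarrow> key \<Rightarrow> key \<Rightarrow> 'k::comm_ring_1" where
  "lift_coeff F x z = (case F x of None \<Rightarrow> 0 | Some (c, w) \<Rightarrow> if w = z then of_int c else 0)"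

definition lift_unary :: "(key \<Rightarrow> (int \<times> key) option) \<Rightarrow> (key \<Rightarrow> 'k::comm_ring_1) \<Rightarrow> (key \<Rightarrow> 'k)" where
  "lift_unary F f = (\<lambda>z. \<Sum>x\<in>supp f. lift_coeff F x z * f x)"

lemma supp_monomial: "c \<noteq> 0 \<Longrightarrow> supp (monomial x c) = {x}"
  by (auto simp: supp_def monomial_def)

lemma supp_lincomb_subset: "supp (\<lambda>z. \<Sum>q\<in>Q. c q * q z) \<subseteq> \<Union> (supp ` Q)"
  by (auto simp: supp_def intro: ccontr elim!: sum.not_neutral_contains_not_neutral)

lemma lift_unary_eq_sum_superset:
  assumes "finite X" "supp f \<subseteq> X"
  shows "lift_unary F f z = (\<Sum>x\<in>X. lift_coeff F x z * f x)"
  unfolding lift_unary_def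
  by (rule sum.mono_neutral_left[OF assms]) (auto simp: supp_def)

lemma lift_unary_eq_zero:
  assumes "\<forall>x\<in>supp f. F x = None"
  shows "lift_unary F f = (\<lambda>_. 0)"
  unfolding lift_unary_def using assms by (intro ext sum.neutral) (simp add: lift_coeff_def)

lemma lift_unary_monomial: "c \<noteq> 0 \<Longrightarrow> lift_unary F (monomial x c) = (\<lambda>z. lift_coeff F x z * c)"
  by (simp add: lift_unary_def supp_monomial, simp add: monomial_def)

lemma lift_unary_sum:
  assumes "finite Q" "\<forall>q\<in>Q. finite (supp q)"
  shows "lift_unary F (\<lambda>z. \<Sum>q\<in>Q. c q * q z) z = (\<Sum>q\<in>Q. c q * lift_unary F q z)"
proof -
  define X where "X = \<Union> (supp ` Q)"
  have X: "finite X" "\<forall>q\<in>Q. supp q \<subseteq> X" using assms by (auto simp: X_def)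
  have "supp (\<lambda>z. \<Sum>q\<in>Q. c q * q z) \<subseteq> X" unfolding X_def by (rule supp_lincomb_subset)
  then have "lift_unary F (\<lambda>z. \<Sum>q\<in>Q. c q * q z) z = (\<Sum>x\<in>X. lift_coeff F x z * (\<Sum>q\<in>Q. c q * q x))"
    by (rule lift_unary_eq_sum_superset[OF X(1)])
  also have "\<dots> = (\<Sum>q\<in>Q. c q * (\<Sum>x\<in>X. lift_coeff F x z * q x))"
    unfolding sum_distrib_left by (subst sum.swap) (simp add: mult.left_commute)
  also have "\<dots> = (\<Sum>q\<in>Q. c q * lift_unary F q z)"
    using X(2) by (intro sum.cong refl) (simp add: lift_unary_eq_sum_superset[OF X(1)])
  finally show ?thesis .
qed

lemma lift_eq_sum_right: "lift F f h z = (\<Sum>y\<in>supp h. h y * lift_unary (\<lambda>x. F x y) f z)"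
proof -
  have "lift F f h z = (\<Sum>x\<in>supp f. \<Sum>y\<in>supp h. h y * (lift_coeff (\<lambda>x. F x y) x z * f x))"
    unfolding lift_def lift_coeff_def
    by (intro sum.cong refl) (auto split: option.split)
  also have "\<dots> = (\<Sum>y\<in>supp h. h y * lift_unary (\<lambda>x. F x y) f z)"
    by (subst sum.swap) (simp add: lift_unary_def sum_distrib_left)
  finally show ?thesis .
qed

lemma lift_eq_sum_left: "lift F h f z = (\<Sum>y\<in>supp h. h y * lift_unary (F y) f z)"
  unfolding lift_def lift_unary_def lift_coeff_def sum_distrib_left
  by (intro sum.cong refl) (auto split: option.split)

lemma trivial_ring_eq_zero: "(1::'k::comm_ring_1) = 0 \<Longrightarrow> a = (0::'k)"
  by (metis mult_1 mult_zero_left)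

lemma lift_monomial_one_right:
  fixes f :: "key \<Rightarrow> 'k::comm_ring_1"
  shows "lift F f (monomial y 1) = lift_unary (\<lambda>x. F x y) f"
proof (cases "(1::'k) = 0")
  case True
  then show ?thesis by (intro ext) (metis trivial_ring_eq_zero)
next
  case False
  have "monomial y 1 y = (1::'k)" by (simp add: monomial_def)
  then show ?thesis by (intro ext) (simp add: lift_eq_sum_right supp_monomial[OF False])
qed

lemma lift_monomial_one_left:
  fixes f :: "key \<Rightarrow> 'k::comm_ring_1"
  shows "lift F (monomial y 1) f = lift_unary (F y) f"
proof (cases "(1::'k) = 0")
  case True
  then show ?thesis by (intro ext) (metis trivial_ring_eq_zero)
next
  case False
  have "monomial y 1 y = (1::'k)" by (simp add: monomial_def)
  then show ?thesis by (intro ext) (simp add: lift_eq_sum_left supp_monomial[OF False])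
qed

section \<open>Leading monomials\<close>

lemma valid_key_nth:
  assumes "valid_key M x" "i < length (snd x)"
  shows "snd x ! i \<subseteq> {1..M * fst x}" "card (snd x ! i) = fst x" "finite (snd x ! i)"
proof -
  have "snd x ! i \<in> set (snd x)" using assms(2) by simp
  then show sub: "snd x ! i \<subseteq> {1..M * fst x}" and "card (snd x ! i) = fst x"
    using assms(1) unfolding valid_key_def by blast+
  show "finite (snd x ! i)" using finite_subset[OF sub] by simp
qed

lemma Pdn_supp_keyD:
  assumes "f \<in> Pdn M d n" "x \<in> supp f"
  shows "valid_key M x" "fst x = d" "length (snd x) = n"
  using assms by (auto simp: Pdn_def PM_def bideg_def)

lemma finite_supp_PM: "f \<in> PM M \<Longrightarrow> finite (supp f)"
  by (simp add: PM_def)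

lemma inj_on_key_rep: "inj_on key_rep {x. valid_key M x \<and> fst x = d}"
proof
  fix x y assume x: "x \<in> {x. valid_key M x \<and> fst x = d}" and y: "y \<in> {x. valid_key M x \<and> fst x = d}"
    and eq: "key_rep x = key_rep y"
  have len: "length (snd x) = length (snd y)" using arg_cong[OF eq, of length] by (simp add: key_rep_def)
  have "snd x ! i = snd y ! i" if "i < length (snd x)" for i
  proof -
    have "sorted_list_of_set (snd x ! i) = sorted_list_of_set (snd y ! i)"
      using arg_cong[OF eq, of "\<lambda>l. l ! i"] that len by (simp add: key_rep_def)
    moreover have "finite (snd x ! i)" "finite (snd y ! i)"
      using valid_key_nth(3)[of M x i] valid_key_nth(3)[of M y i] x y that len by auto
    ultimately show ?thesis by (rule sorted_list_of_set_inject)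
  qed
  then have "snd x = snd y" using len by (simp add: list_eq_iff_nth_eq)
  then show "x = y" using x y by (simp add: prod_eq_iff)
qed

lemma inj_on_key_rep_supp: "f \<in> Pdn M d n \<Longrightarrow> inj_on key_rep (supp f)"
  by (rule inj_on_subset[OF inj_on_key_rep]) (auto dest: Pdn_supp_keyD)

lemma lead_key_eqI:
  assumes "f \<in> Pdn M d n" "x \<in> supp f" "\<forall>y\<in>supp f. key_rep y \<le> key_rep x"
  shows "lead_key f = x"
  unfolding lead_key_def
proof (rule the_equality)
  fix x' assume x': "x' \<in> supp f \<and> (\<forall>y\<in>supp f. key_rep y \<le> key_rep x')"
  then have "key_rep x' = key_rep x" using assms(2,3) by (simp add: order_antisym)
  then show "x' = x" using inj_on_key_rep_supp[OF assms(1)] x' assms(2) by (simp add: inj_on_eq_iff)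
qed (use assms in blast)

lemma lead_key_greatest:
  assumes "f \<in> Pdn M d n" "f \<noteq> (\<lambda>_. 0)"
  shows "lead_key f \<in> supp f" "\<forall>y\<in>supp f. key_rep y \<le> key_rep (lead_key f)"
proof -
  have fin: "finite (key_rep ` supp f)" using assms(1) finite_supp_PM by (auto simp: Pdn_def)
  have "supp f \<noteq> {}" using assms(2) by (auto simp: supp_def)
  then have "Max (key_rep ` supp f) \<in> key_rep ` supp f" using fin by (intro Max_in) auto
  then obtain x where x: "x \<in> supp f" "key_rep x = Max (key_rep ` supp f)" by auto
  then have "lead_key f = x" using lead_key_eqI[OF assms(1) x(1)] fin by simp
  then show "lead_key f \<in> supp f" "\<forall>y\<in>supp f. key_rep y \<le> key_rep (lead_key f)"
    using x fin by simp_all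
qed

lemma supp_init_subset:
  assumes "f \<in> Pdn M d n" "f \<noteq> (\<lambda>_. 0)"
  shows "supp (init f) \<subseteq> supp f"
  using lead_key_greatest(1)[OF assms] by (auto simp: init_def supp_def monomial_def)

context
  fixes F :: "key \<Rightarrow> (int \<times> key) option" and f :: "key \<Rightarrow> 'k::comm_ring_1"
    and \<phi> :: "key \<Rightarrow> key" and s :: "key \<Rightarrow> int"
  assumes fin: "finite (supp f)" and inj: "inj_on \<phi> (supp f)"
    and some: "\<forall>x\<in>supp f. F x = Some (s x, \<phi> x)" and unit: "\<forall>x\<in>supp f. s x = 1 \<or> s x = -1"
begin

lemma lift_unary_apply_image:
  assumes "x \<in> supp f"
  shows "lift_unary F f (\<phi> x) = of_int (s x) * f x"
proof -
  have "lift_unary F f (\<phi> x) = (\<Sum>x'\<in>supp f. if x' = x then of_int (s x') * f x' else 0)"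
    unfolding lift_unary_def
    using some inj assms by (intro sum.cong refl) (auto simp: lift_coeff_def inj_on_eq_iff)
  then show ?thesis using fin assms by simp
qed

lemma supp_lift_unary: "supp (lift_unary F f) = \<phi> ` supp f"
proof -
  have "lift_unary F f z = 0" if "z \<notin> \<phi> ` supp f" for z
    unfolding lift_unary_def using some that by (intro sum.neutral) (auto simp: lift_coeff_def)
  moreover have "of_int (s x) * f x \<noteq> 0" if "x \<in> supp f" for x
    using unit[rule_format, OF that] that by (auto simp: supp_def)
  ultimately show ?thesis using lift_unary_apply_image by (auto simp: supp_def)
qed

end

definition key_mono_on :: "key set \<Rightarrow> (key \<Rightarrow> key) \<Rightarrow> bool" where
  "key_mono_on S \<phi> \<longleftrightarrow> (\<forall>x\<in>S. \<forall>x'\<in>S. key_rep x < key_rep x' \<longrightarrow> key_rep (\<phi> x) < key_rep (\<phi> x'))"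

lemma key_rep_trichotomy:
  assumes "f \<in> Pdn M d n" "x \<in> supp f" "x' \<in> supp f"
  shows "key_rep x < key_rep x' \<or> x = x' \<or> key_rep x' < key_rep x"
  using inj_on_eq_iff[OF inj_on_key_rep_supp[OF assms(1)] assms(2,3)] neq_iff by blast

lemma inj_on_if_key_rep_mono:
  assumes f: "f \<in> Pdn M d n"
    and mono: "key_mono_on (supp f) \<phi>"
  shows "inj_on \<phi> (supp f)"
proof (rule inj_onI)
  fix x x' assume x: "x \<in> supp f" "x' \<in> supp f" and "\<phi> x = \<phi> x'"
  then show "x = x'"
    using key_rep_trichotomy[OF f x] mono[unfolded key_mono_on_def, rule_format, OF x]
      mono[unfolded key_mono_on_def, rule_format, OF x(2,1)] by auto
qed

lemma init_lift_unary:
  fixes f :: "key \<Rightarrow> 'k::comm_ring_1"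
  assumes f: "f \<in> Pdn M d n" "f \<noteq> (\<lambda>_. 0)"
    and some: "\<forall>x\<in>supp f. F x = Some (s x, \<phi> x)" and unit: "\<forall>x\<in>supp f. s x = 1 \<or> s x = -1"
    and mono: "key_mono_on (supp f) \<phi>"
    and bideg: "\<forall>x\<in>supp f. bideg (\<phi> x) = (d', n')"
    and PM: "lift_unary F f \<in> PM M"
  shows "lift_unary F f \<in> Pdn M d' n'" "lift_unary F f \<noteq> (\<lambda>_. 0)"
    "init (lift_unary F f) = lift_unary F (init f)"
proof -
  have fin: "finite (supp f)" using f(1) finite_supp_PM by (auto simp: Pdn_def)
  have inj: "inj_on \<phi> (supp f)" by (rule inj_on_if_key_rep_mono[OF f(1) mono])
  note supp = supp_lift_unary[OF fin inj some unit]
    and apply_image = lift_unary_apply_image[OF fin inj some unit]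
  define x0 where "x0 = lead_key f"
  have x0: "x0 \<in> supp f" "\<forall>y\<in>supp f. key_rep y \<le> key_rep x0"
    using lead_key_greatest[OF f] by (simp_all add: x0_def)
  show Pdn: "lift_unary F f \<in> Pdn M d' n'" using PM bideg supp by (auto simp: Pdn_def)
  show "lift_unary F f \<noteq> (\<lambda>_. 0)" using supp x0(1) by (auto simp: supp_def)
  have "\<forall>y\<in>supp f. key_rep (\<phi> y) \<le> key_rep (\<phi> x0)"
  proof
    fix y assume y: "y \<in> supp f"
    then show "key_rep (\<phi> y) \<le> key_rep (\<phi> x0)"
      using key_rep_trichotomy[OF f(1) y x0(1)] mono[unfolded key_mono_on_def, rule_format, OF y x0(1)] x0(2) y
      by auto
  qed
  then have "lead_key (lift_unary F f) = \<phi> x0"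
    using supp x0(1) by (intro lead_key_eqI[OF Pdn]) auto
  then have "init (lift_unary F f) = monomial (\<phi> x0) (of_int (s x0) * f x0)"
    by (simp add: init_def apply_image[OF x0(1)])
  also have "\<dots> = lift_unary F (init f)"
  proof -
    have "f x0 \<noteq> 0" using x0(1) by (simp add: supp_def)
    then have "lift_unary F (init f) = (\<lambda>z. lift_coeff F x0 z * f x0)"
      by (simp add: init_def x0_def[symmetric] lift_unary_monomial)
    then show ?thesis using some x0(1) by (auto simp: lift_coeff_def monomial_def)
  qed
  finally show "init (lift_unary F f) = lift_unary F (init f)" .
qed

section \<open>Both products by a basis monomial are strictly monotone\<close>

lemma gcomp_mem:
  assumes g: "strict_mono g" and range: "g ` {1..M * d} \<subseteq> {1..M * (d + e)}" and t: "t \<in> {1..M * e}"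
  shows "gcomp M g d e t \<in> {1..M * (d + e)} - g ` {1..M * d}"
proof -
  define C where "C = {1..M * (d + e)} - g ` {1..M * d}"
  have "card (g ` {1..M * d}) = M * d"
    using card_image[OF inj_on_subset[OF strict_mono_imp_inj_on[OF g] subset_UNIV]] by simp
  then have "card C = M * (d + e) - M * d"
    unfolding C_def using range by (simp add: card_Diff_subset)
  then have "length (sorted_list_of_set C) = M * e" by (simp add: distrib_left)
  then have "sorted_list_of_set C ! (t - 1) \<in> set (sorted_list_of_set C)"
    using t by (intro nth_mem) auto
  then show ?thesis by (simp add: gcomp_def C_def)
qed

lemma star_key_mono:
  assumes g: "strict_mono g" and range: "g ` {1..M * d} \<subseteq> {1..M * (d + e)}"
    and x: "valid_key M x" "fst x = d" "length (snd x) = n"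
    and x': "valid_key M x'" "fst x' = d" "length (snd x') = n"
    and y: "valid_key M y" "fst y = e" "length (snd y) = n"
    and less: "key_rep x < key_rep x'"
  shows "key_rep (d + e, map (\<lambda>(S, T). g ` S \<union> gcomp M g d e ` T) (zip (snd x) (snd y)))
       < key_rep (d + e, map (\<lambda>(S, T). g ` S \<union> gcomp M g d e ` T) (zip (snd x') (snd y)))"
proof -
  define F where "F S T = sorted_list_of_set (g ` S \<union> gcomp M g d e ` T)" for S T
  have comp: "finite (snd x ! j)" "finite (snd x' ! j)" "card (snd x ! j) = card (snd x' ! j)"
    "finite (snd y ! j)" "snd x ! j \<subseteq> {1..M * d}" "snd x' ! j \<subseteq> {1..M * d}" "snd y ! j \<subseteq> {1..M * e}"
    if "j < n" for j
    using valid_key_nth[OF x(1)] valid_key_nth[OF x'(1)] valid_key_nth[OF y(1)] x x' y that by auto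
  have disj: "gcomp M g d e ` (snd y ! j) \<inter> g ` S = {}" if "j < n" "S \<subseteq> {1..M * d}" for j S
    using gcomp_mem[OF g range] comp(7)[OF that(1)] that(2) by blast
  have "map (\<lambda>(S, T). F S T) (zip (snd x) (snd y)) < map (\<lambda>(S, T). F S T) (zip (snd x') (snd y))"
  proof (rule map_zip_less[where r = sorted_list_of_set])
    show "map sorted_list_of_set (snd x) < map sorted_list_of_set (snd x')"
      using less by (simp add: key_rep_def)
    show "snd x ! j = snd x' ! j"
      if "j < length (snd x)" "sorted_list_of_set (snd x ! j) = sorted_list_of_set (snd x' ! j)" for j
    proof -
      have "finite (snd x ! j)" "finite (snd x' ! j)" using comp that(1) x(3) by auto
      then show ?thesis using sorted_list_of_set_inject[OF that(2)] by blast
    qed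
    show "F (snd x ! j) (snd y ! j) < F (snd x' ! j) (snd y ! j)"
      if "j < length (snd x)" "sorted_list_of_set (snd x ! j) < sorted_list_of_set (snd x' ! j)" for j
    proof -
      have j: "j < n" using that(1) x(3) by simp
      have "finite (gcomp M g d e ` (snd y ! j))" using comp(4)[OF j] by simp
      then show ?thesis
        unfolding F_def using comp[OF j] that(2) disj[OF j comp(5)[OF j]] disj[OF j comp(6)[OF j]]
        by (intro sorted_list_of_set_image_Un_less[OF g]) simp_all
    qed
  qed (use x x' y in simp_all)
  moreover have "sorted_list_of_set \<circ> (\<lambda>(S, T). g ` S \<union> gcomp M g d e ` T) = (\<lambda>(S, T). F S T)"
    by (auto simp: F_def)
  ultimately show ?thesis by (simp add: key_rep_def)
qed

lemma sigma_key_mono: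
  fixes x x' y :: key
  assumes part: "A \<inter> B = {}" "A \<union> B = {1..n + m}" "card A = n"
    and y: "length (snd y) = n" and x: "length (snd x) = m" and x': "length (snd x') = m"
    and less: "key_rep x < key_rep x'"
  shows "key_rep (d, map (interleave A B (snd y) (snd x)) [1..<n + m + 1])
       < key_rep (d, map (interleave A B (snd y) (snd x')) [1..<n + m + 1])"
proof -
  have rep: "key_rep (d, map (interleave A B (snd y) (snd z)) [1..<n + m + 1])
      = map (interleave A B (key_rep y) (key_rep z)) [1..<n + m + 1]" if "length (snd z) = m" for z
    unfolding key_rep_def using map_interleave[OF part y that] by simp
  show ?thesis
    unfolding rep[OF x] rep[OF x'] using x x' less by (intro interleave_less[OF part]) (simp_all add: key_rep_def)
qed

lemma kspan_zero: "(\<lambda>_. 0) \<in> kspan X"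
  unfolding kspan_def by (rule CollectI, rule exI[of _ "{}"]) simp

lemma subset_kspan: "X \<subseteq> kspan X"
  unfolding kspan_def by (auto intro!: exI[of _ "{p}" for p] exI[of _ "\<lambda>_. 1"])

lemma kspan_smult: "p \<in> kspan X \<Longrightarrow> (\<lambda>z. a * p z) \<in> kspan X"
  unfolding kspan_def
  by (auto simp: sum_distrib_left mult.assoc intro!: exI[of _ "\<lambda>q. a * _ q"])

lemma kspan_add:
  assumes "p \<in> kspan X" "r \<in> kspan X"
  shows "(\<lambda>z. p z + r z) \<in> kspan X"
proof -
  obtain F c F' c' where F: "finite F" "F \<subseteq> X" "p = (\<lambda>z. \<Sum>q\<in>F. c q * q z)"
    and F': "finite F'" "F' \<subseteq> X" "r = (\<lambda>z. \<Sum>q\<in>F'. c' q * q z)"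
    using assms unfolding kspan_def by blast
  define C where "C q = (if q \<in> F then c q else 0) + (if q \<in> F' then c' q else 0)" for q
  have "(\<Sum>q\<in>F \<union> F'. C q * q z) = (\<Sum>q\<in>F \<union> F'. if q \<in> F then c q * q z else 0)
      + (\<Sum>q\<in>F \<union> F'. if q \<in> F' then c' q * q z else 0)" for z
    unfolding sum.distrib[symmetric] by (intro sum.cong) (auto simp: C_def distrib_right)
  also have "\<dots> z = (\<Sum>q\<in>F. c q * q z) + (\<Sum>q\<in>F'. c' q * q z)" for z
    using F(1) F'(1) by (simp add: sum.inter_restrict[symmetric])
  finally have "(\<Sum>q\<in>F \<union> F'. C q * q z) = (\<Sum>q\<in>F. c q * q z) + (\<Sum>q\<in>F'. c' q * q z)" for z .
  then show ?thesis
    unfolding kspan_def using F F' by (auto intro!: exI[of _ "F \<union> F'"] exI[of _ C])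
qed

lemma kspan_sum:
  assumes "finite A" "\<forall>a\<in>A. g a \<in> kspan X"
  shows "(\<lambda>z. \<Sum>a\<in>A. g a z) \<in> kspan X"
  using assms
proof (induction A rule: finite_induct)
  case empty
  then show ?case using kspan_zero by simp
next
  case (insert a A)
  then show ?case using kspan_add[of "g a" X "\<lambda>z. \<Sum>a\<in>A. g a z"] by simp
qed

lemma kspan_subset_ideal:
  assumes J: "is_ideal M J" and "X \<subseteq> J"
  shows "kspan X \<subseteq> J"
proof
  fix p assume "p \<in> kspan X"
  then obtain F c where F: "finite F" "F \<subseteq> X" "p = (\<lambda>z. \<Sum>q\<in>F. c q * q z)"
    unfolding kspan_def by blast
  have "(\<lambda>z. \<Sum>q\<in>F'. c q * q z) \<in> J" if "finite F'" "F' \<subseteq> X" for F'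
    using that
  proof (induction F' rule: finite_induct)
    case empty
    then show ?case using J unfolding is_ideal_def by simp
  next
    case (insert a A)
    then have "(\<lambda>z. c a * a z) \<in> J" using J \<open>X \<subseteq> J\<close> unfolding is_ideal_def by blast
    then show ?case using insert J unfolding is_ideal_def by simp
  qed
  then show "p \<in> J" using F by simp
qed

lemma kspan_subset_PM:
  assumes "X \<subseteq> PM M"
  shows "kspan X \<subseteq> PM M"
proof
  fix p assume "p \<in> kspan X"
  then obtain F c where F: "finite F" "F \<subseteq> X" "p = (\<lambda>z. \<Sum>q\<in>F. c q * q z)"
    unfolding kspan_def by blast
  have "supp p \<subseteq> \<Union> (supp ` F)" unfolding F(3) by (rule supp_lincomb_subset)
  moreover have "\<forall>q\<in>F. finite (supp q) \<and> (\<forall>x\<in>supp q. valid_key M x)"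
    using F(2) assms by (auto simp: PM_def)
  ultimately show "p \<in> PM M"
    using F(1) finite_subset unfolding PM_def by blast
qed

lemma kspan_sum_lift_unary:
  assumes p: "p \<in> kspan X" and X: "\<forall>q\<in>X. finite (supp q)" and h: "finite (supp h)"
    and closed: "\<And>q y. q \<in> X \<Longrightarrow> y \<in> supp h \<Longrightarrow> lift_unary (\<Psi> y) q \<in> kspan X"
  shows "(\<lambda>z. \<Sum>y\<in>supp h. h y * lift_unary (\<Psi> y) p z) \<in> kspan X"
proof -
  obtain F c where F: "finite F" "F \<subseteq> X" "p = (\<lambda>z. \<Sum>q\<in>F. c q * q z)"
    using p unfolding kspan_def by blast
  have "\<forall>q\<in>F. finite (supp q)" using F(2) X by blast
  then have p_lift: "lift_unary (\<Psi> y) p z = (\<Sum>q\<in>F. c q * lift_unary (\<Psi> y) q z)" for y z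
    unfolding F(3) by (rule lift_unary_sum[OF F(1)])
  have "(\<lambda>z. \<Sum>q\<in>F. c q * lift_unary (\<Psi> y) q z) \<in> kspan X" if "y \<in> supp h" for y
    by (intro kspan_sum[OF F(1)] ballI kspan_smult closed) (use F(2) that in auto)
  then have "(\<lambda>z. \<Sum>y\<in>supp h. h y * (\<Sum>q\<in>F. c q * lift_unary (\<Psi> y) q z)) \<in> kspan X"
    by (intro kspan_sum[OF h]) (auto intro: kspan_smult)
  then show ?thesis unfolding p_lift .
qed

lemma hcomp_monomial: "hcomp d n (monomial x c) = (if bideg x = (d, n) then monomial x c else (\<lambda>_. 0))"
  by (rule ext) (simp add: hcomp_def monomial_def)

lemma kspan_hcomp:
  assumes X: "X \<subseteq> monomials M" and p: "p \<in> kspan X"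
  shows "hcomp d n p \<in> kspan X"
proof -
  obtain F c where F: "finite F" "F \<subseteq> X" "p = (\<lambda>z. \<Sum>q\<in>F. c q * q z)"
    using p unfolding kspan_def by blast
  have "hcomp d n q \<in> kspan X" if "q \<in> F" for q
  proof -
    have "q \<in> monomials M" using that F(2) X by blast
    then obtain x a where "q = monomial x a" unfolding monomials_def by blast
    moreover have "q \<in> kspan X" using that F(2) subset_kspan by blast
    ultimately show ?thesis by (simp add: hcomp_monomial kspan_zero)
  qed
  then have "(\<lambda>z. \<Sum>q\<in>F. c q * hcomp d n q z) \<in> kspan X"
    by (intro kspan_sum[OF F(1)]) (auto intro: kspan_smult)
  moreover have "hcomp d n p = (\<lambda>z. \<Sum>q\<in>F. c q * hcomp d n q z)"
    unfolding F(3) hcomp_def by (rule ext) (simp add: sum_distrib_left)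
  ultimately show ?thesis by simp
qed

section \<open>The initial ideal\<close>

definition initial_monomials :: "nat \<Rightarrow> (key \<Rightarrow> 'k::comm_ring_1) set \<Rightarrow> (key \<Rightarrow> 'k) set" where
  "initial_monomials M I = {init f | f. f \<noteq> (\<lambda>_. 0) \<and> (\<exists>d n. f \<in> I \<inter> Pdn M d n)}"

lemma init_ideal_eq_kspan: "init_ideal M I = kspan (initial_monomials M I)"
  by (simp add: init_ideal_def initial_monomials_def)

lemma monomials_subset_PM: "monomials M \<subseteq> PM M"
proof
  fix q assume "q \<in> monomials M"
  then obtain x c where q: "q = monomial x c" "valid_key M x" unfolding monomials_def by blast
  then have "supp q \<subseteq> {x}" by (auto simp: supp_def monomial_def)
  then show "q \<in> PM M" using q(2) finite_subset unfolding PM_def by blast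
qed

lemma initial_monomials_subset: "initial_monomials M I \<subseteq> monomials M"
proof
  fix q assume "q \<in> initial_monomials M I"
  then obtain f d n where f: "q = init f" "f \<in> Pdn M d n" "f \<noteq> (\<lambda>_. 0)"
    unfolding initial_monomials_def by blast
  then have "valid_key M (lead_key f)" using lead_key_greatest(1) Pdn_supp_keyD(1) by blast
  then show "q \<in> monomials M" unfolding f(1) init_def monomials_def by blast
qed

lemma finite_supp_initial_monomials: "q \<in> initial_monomials M I \<Longrightarrow> finite (supp q)"
  using initial_monomials_subset monomials_subset_PM finite_supp_PM by blast

lemma ideal_subset_PM: "is_ideal M I \<Longrightarrow> I \<subseteq> PM M"
  unfolding is_ideal_def by blast

lemma lift_unary_init_mem_init_ideal:
  assumes I: "is_ideal M I" and f: "f \<in> I" "f \<in> Pdn M d n" "f \<noteq> (\<lambda>_. 0)"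
    and lift_mem: "lift_unary F f \<in> I"
    and some: "\<forall>x\<in>supp f. F x = Some (s x, \<phi> x)" and unit: "\<forall>x\<in>supp f. s x = 1 \<or> s x = -1"
    and mono: "key_mono_on (supp f) \<phi>"
    and bideg: "\<forall>x\<in>supp f. bideg (\<phi> x) = (d', n')"
  shows "lift_unary F (init f) \<in> init_ideal M I"
proof -
  note lift = init_lift_unary[OF f(2,3) some unit mono bideg]
  have "lift_unary F f \<in> PM M" using lift_mem ideal_subset_PM[OF I] by blast
  note lift = lift[OF this]
  have "init (lift_unary F f) \<in> initial_monomials M I"
    unfolding initial_monomials_def using lift(1,2) lift_mem by blast
  then have "lift_unary F (init f) \<in> initial_monomials M I" using lift(3) by simp
  then show ?thesis unfolding init_ideal_eq_kspan using subset_kspan by blast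
qed

lemma lift_unary_init_eq_zero:
  assumes "f \<in> Pdn M d n" "f \<noteq> (\<lambda>_. 0)" "\<forall>x\<in>supp f. F x = None"
  shows "lift_unary F (init f) = (\<lambda>_. 0)"
  using assms supp_init_subset[OF assms(1,2)] by (intro lift_unary_eq_zero) blast

lemma star_lift_unary_init_mem:
  assumes I: "is_ideal M I" and f: "f \<in> I" "f \<in> Pdn M d n" "f \<noteq> (\<lambda>_. 0)"
    and y: "valid_key M y" and g: "strict_mono g"
  shows "lift_unary (\<lambda>x. star_mono M g x y) (init f) \<in> init_ideal M I"
proof (cases "length (snd y) = n \<and> g ` {1..M * d} \<subseteq> {1..M * (d + fst y)}")
  case False
  then have "\<forall>x\<in>supp f. star_mono M g x y = None"
    using Pdn_supp_keyD[OF f(2)] by (simp add: star_mono_def Let_def)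
  then show ?thesis
    using lift_unary_init_eq_zero[OF f(2,3)] kspan_zero by (simp add: init_ideal_eq_kspan)
next
  case True
  define e where "e = fst y"
  define s where "s x = (-1::int) ^ (\<Sum>(S, T)\<leftarrow>zip (snd x) (snd y). wedge_inv (g ` S) (gcomp M g d e ` T))"
    for x :: key
  define \<phi> where "\<phi> x = (d + e, map (\<lambda>(S, T). g ` S \<union> gcomp M g d e ` T) (zip (snd x) (snd y)))"
    for x :: key
  have "star_prod M g f (monomial y 1) \<in> I"
    using I f(1) monomials_subset_PM y g unfolding is_ideal_def monomials_def by blast
  then have "lift_unary (\<lambda>x. star_mono M g x y) f \<in> I"
    by (simp add: star_prod_def lift_monomial_one_right)
  moreover have "\<forall>x\<in>supp f. star_mono M g x y = Some (s x, \<phi> x)"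
    using Pdn_supp_keyD[OF f(2)] True by (simp add: star_mono_def Let_def s_def \<phi>_def e_def)
  moreover have "\<forall>x\<in>supp f. s x = 1 \<or> s x = -1"
    unfolding s_def by (simp add: minus_one_power_iff)
  moreover have "key_mono_on (supp f) \<phi>"
    using star_key_mono[OF g _ Pdn_supp_keyD[OF f(2)] Pdn_supp_keyD[OF f(2)] y e_def[symmetric]] True
    unfolding key_mono_on_def \<phi>_def e_def by blast
  moreover have "\<forall>x\<in>supp f. bideg (\<phi> x) = (d + e, n)"
    using Pdn_supp_keyD[OF f(2)] True by (simp add: \<phi>_def bideg_def)
  ultimately show ?thesis by (rule lift_unary_init_mem_init_ideal[OF I f])
qed

lemma sigma_lift_unary_init_mem:
  assumes I: "is_ideal M I" and f: "f \<in> I" "f \<in> Pdn M d m" "f \<noteq> (\<lambda>_. 0)"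
    and y: "valid_key M y"
  shows "lift_unary (sigma_mono A B y) (init f) \<in> init_ideal M I"
proof (cases "fst y = d \<and> A \<inter> B = {} \<and> A \<union> B = {1..length (snd y) + m} \<and> card A = length (snd y)")
  case False
  then have "\<forall>x\<in>supp f. sigma_mono A B y x = None"
    using Pdn_supp_keyD[OF f(2)] by (simp add: sigma_mono_def Let_def)
  then show ?thesis
    using lift_unary_init_eq_zero[OF f(2,3)] kspan_zero by (simp add: init_ideal_eq_kspan)
next
  case True
  define n where "n = length (snd y)"
  define \<phi> where "\<phi> x = (d, map (interleave A B (snd y) (snd x)) [1..<n + m + 1])" for x :: key
  have part: "A \<inter> B = {}" "A \<union> B = {1..n + m}" "card A = n" using True by (simp_all add: n_def)
  have "sigma_prod A B (monomial y 1) f \<in> I"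
    using I f(1) monomials_subset_PM y unfolding is_ideal_def monomials_def by blast
  then have "lift_unary (sigma_mono A B y) f \<in> I"
    by (simp add: sigma_prod_def lift_monomial_one_left)
  moreover have "\<forall>x\<in>supp f. sigma_mono A B y x = Some (1, \<phi> x)"
    using Pdn_supp_keyD[OF f(2)] True by (simp add: sigma_mono_def Let_def \<phi>_def n_def)
  moreover have "key_mono_on (supp f) \<phi>"
    using sigma_key_mono[OF part n_def[symmetric]] Pdn_supp_keyD(3)[OF f(2)]
    unfolding key_mono_on_def \<phi>_def by blast
  moreover have "\<forall>x\<in>supp f. bideg (\<phi> x) = (d, n + m)"
    using Pdn_supp_keyD[OF f(2)] by (simp add: \<phi>_def bideg_def del: upt_Suc)
  ultimately show ?thesis by (intro lift_unary_init_mem_init_ideal[OF I f, of _ "\<lambda>_. 1"]) simp_all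
qed

lemma star_prod_mem_init_ideal:
  assumes I: "is_ideal M I" and p: "p \<in> init_ideal M I" and h: "h \<in> PM M" and g: "strict_mono g"
  shows "star_prod M g p h \<in> init_ideal M I"
proof -
  have "star_prod M g p h = (\<lambda>z. \<Sum>y\<in>supp h. h y * lift_unary (\<lambda>x. star_mono M g x y) p z)"
    by (simp add: fun_eq_iff star_prod_def lift_eq_sum_right)
  also have "\<dots> \<in> init_ideal M I"
    unfolding init_ideal_eq_kspan
  proof (rule kspan_sum_lift_unary)
    fix q y assume "q \<in> initial_monomials M I" "y \<in> supp h"
    then obtain f d n where "q = init f" "f \<in> I" "f \<in> Pdn M d n" "f \<noteq> (\<lambda>_. 0)"
      and "valid_key M y" using h unfolding initial_monomials_def PM_def by blast
    then show "lift_unary (\<lambda>x. star_mono M g x y) q \<in> kspan (initial_monomials M I)"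
      using star_lift_unary_init_mem[OF I _ _ _ _ g] by (simp add: init_ideal_eq_kspan)
  qed (use p h in \<open>auto simp: init_ideal_eq_kspan finite_supp_PM finite_supp_initial_monomials\<close>)
  finally show ?thesis .
qed

lemma sigma_prod_mem_init_ideal:
  assumes I: "is_ideal M I" and p: "p \<in> init_ideal M I" and h: "h \<in> PM M"
  shows "sigma_prod A B h p \<in> init_ideal M I"
proof -
  have "sigma_prod A B h p = (\<lambda>z. \<Sum>y\<in>supp h. h y * lift_unary (sigma_mono A B y) p z)"
    by (simp add: fun_eq_iff sigma_prod_def lift_eq_sum_left)
  also have "\<dots> \<in> init_ideal M I"
    unfolding init_ideal_eq_kspan
  proof (rule kspan_sum_lift_unary)
    fix q y assume "q \<in> initial_monomials M I" "y \<in> supp h"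
    then obtain f d n where "q = init f" "f \<in> I" "f \<in> Pdn M d n" "f \<noteq> (\<lambda>_. 0)"
      and "valid_key M y" using h unfolding initial_monomials_def PM_def by blast
    then show "lift_unary (sigma_mono A B y) q \<in> kspan (initial_monomials M I)"
      using sigma_lift_unary_init_mem[OF I] by (simp add: init_ideal_eq_kspan)
  qed (use p h in \<open>auto simp: init_ideal_eq_kspan finite_supp_PM finite_supp_initial_monomials\<close>)
  finally show ?thesis .
qed

lemma is_ideal_init_ideal:
  assumes I: "is_ideal M I"
  shows "is_ideal M (init_ideal M I)"
  unfolding is_ideal_def
proof (intro conjI ballI allI impI)
  have "initial_monomials M I \<subseteq> PM M"
    using initial_monomials_subset monomials_subset_PM by blast
  then show "init_ideal M I \<subseteq> PM M" unfolding init_ideal_eq_kspan by (rule kspan_subset_PM)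
  show "(\<lambda>_. 0) \<in> init_ideal M I" by (simp add: init_ideal_eq_kspan kspan_zero)
  show "(\<lambda>z. p z + q z) \<in> init_ideal M I" if "p \<in> init_ideal M I" "q \<in> init_ideal M I" for p q
    using that by (simp add: init_ideal_eq_kspan kspan_add)
  show "(\<lambda>z. c * p z) \<in> init_ideal M I" if "p \<in> init_ideal M I" for c p
    using that by (simp add: init_ideal_eq_kspan kspan_smult)
  show "hcomp d n p \<in> init_ideal M I" if "p \<in> init_ideal M I" for d n p
    using that kspan_hcomp[OF initial_monomials_subset] by (simp add: init_ideal_eq_kspan)
  show "star_prod M g p h \<in> init_ideal M I"
    if "p \<in> init_ideal M I" "h \<in> PM M" "strict_mono g" for p h g
    using star_prod_mem_init_ideal[OF I that] .
  show "sigma_prod A B h p \<in> init_ideal M I" if "p \<in> init_ideal M I" "h \<in> PM M" for p h A B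
    using sigma_prod_mem_init_ideal[OF I that] .
qed

lemma ideal_gen_eqI:
  assumes "is_ideal M J" "G \<subseteq> J" "\<And>J'. is_ideal M J' \<Longrightarrow> G \<subseteq> J' \<Longrightarrow> J \<subseteq> J'"
  shows "ideal_gen M G = J"
  using assms unfolding ideal_gen_def by blast

theorem mainTheorem10:
  fixes M :: nat and I :: "(key \<Rightarrow> 'k::comm_ring_1) set"
  assumes "noetherian_ring TYPE('k)"
    and "is_ideal M I"
  shows "monomial_ideal M (init_ideal M I)"
proof -
  have ideal: "is_ideal M (init_ideal M I)" by (rule is_ideal_init_ideal[OF assms(2)])
  have "ideal_gen M (initial_monomials M I) = init_ideal M I"
    unfolding init_ideal_eq_kspan
  proof (rule ideal_gen_eqI)
    show "is_ideal M (kspan (initial_monomials M I))" using ideal by (simp add: init_ideal_eq_kspan)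
    show "kspan (initial_monomials M I) \<subseteq> J" if "is_ideal M J" "initial_monomials M I \<subseteq> J" for J
      using kspan_subset_ideal[OF that] .
  qed (rule subset_kspan)
  then show ?thesis
    unfolding monomial_ideal_def using ideal initial_monomials_subset by blast
qed

end
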